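(* Let $\mathcal{X},\mathcal{Y}$ be finite sets, $P_{XY}$ a distribution on $\mathcal{X}\times\mathcal{Y}$, and $\mu\ge0$. Then $$\lim_{\delta\to0}R_\mu(\delta\mid P_{XY})=R_\mu(P_{XY}).$$
   Context: For $\delta\ge0$, $\mathcal{R}^*_{\mathtt{WAK}}(\delta\mid P_{XY})$ is the set of pairs $(r_0,r_2)$ for which there exists a conditional distribution $P_{W|XY}$ with finite $\mathcal{W}$, $|\mathcal{W}|\le|\mathcal{X}||\mathcal{Y}|+2$, such that, for $(W,X,Y)\sim P_{XY}P_{W|XY}$, $r_0\ge I(W\wedge X,Y)$, $r_2\ge H(Y\mid W)$ and $\delta\ge I(W\wedge Y\mid X)$. For $\mu\ge0$, $R_\mu(\delta\mid P_{XY}):=\min\{r_0+\mu r_2:(r_0,r_2)\in\mathcal{R}^*_{\mathtt{WAK}}(\delta\mid P_{XY})\}$, and $R_\mu(P_{XY}):=R_\mu(0\mid P_{XY})$. *)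

theory Defs
  imports "HOL-Analysis.Analysis" "HOL-Probability.Probability_Mass_Function"
begin

text \<open>Auxiliary alphabet W is a finite subset of nat; conditional distribution
  V x y w = P_{W|XY}(w|x,y). Logarithms base 2, convention 0 log 0 = 0.\<close>

definition cond_dist_on :: "nat set \<Rightarrow> ('x \<Rightarrow> 'y \<Rightarrow> nat \<Rightarrow> real) \<Rightarrow> bool" where
  "cond_dist_on W V \<longleftrightarrow> finite W \<and>
     (\<forall>x y w. 0 \<le> V x y w) \<and> (\<forall>x y w. w \<notin> W \<longrightarrow> V x y w = 0) \<and>
     (\<forall>x y. (\<Sum>w\<in>W. V x y w) = 1)"

definition jointp :: "('x \<times> 'y) pmf \<Rightarrow> ('x \<Rightarrow> 'y \<Rightarrow> nat \<Rightarrow> real) \<Rightarrow> nat \<Rightarrow> 'x \<Rightarrow> 'y \<Rightarrow> real" where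
  "jointp P V w x y = pmf P (x, y) * V x y w"

definition pW :: "('x::finite \<times> 'y::finite) pmf \<Rightarrow> ('x \<Rightarrow> 'y \<Rightarrow> nat \<Rightarrow> real) \<Rightarrow> nat \<Rightarrow> real" where
  "pW P V w = (\<Sum>x\<in>UNIV. \<Sum>y\<in>UNIV. jointp P V w x y)"

definition pX :: "('x::finite \<times> 'y::finite) pmf \<Rightarrow> 'x \<Rightarrow> real" where
  "pX P x = (\<Sum>y\<in>UNIV. pmf P (x, y))"

definition pWX :: "('x::finite \<times> 'y::finite) pmf \<Rightarrow> ('x \<Rightarrow> 'y \<Rightarrow> nat \<Rightarrow> real) \<Rightarrow> nat \<Rightarrow> 'x \<Rightarrow> real" where
  "pWX P V w x = (\<Sum>y\<in>UNIV. jointp P V w x y)"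

definition pWY :: "('x::finite \<times> 'y::finite) pmf \<Rightarrow> ('x \<Rightarrow> 'y \<Rightarrow> nat \<Rightarrow> real) \<Rightarrow> nat \<Rightarrow> 'y \<Rightarrow> real" where
  "pWY P V w y = (\<Sum>x\<in>UNIV. jointp P V w x y)"

definition MI_W_XY :: "nat set \<Rightarrow> ('x::finite \<times> 'y::finite) pmf \<Rightarrow> ('x \<Rightarrow> 'y \<Rightarrow> nat \<Rightarrow> real) \<Rightarrow> real" where
  "MI_W_XY W P V = (\<Sum>w\<in>W. \<Sum>x\<in>UNIV. \<Sum>y\<in>UNIV.
     (let p = jointp P V w x y in
      if p = 0 then 0 else p * log 2 (p / (pW P V w * pmf P (x, y)))))"

definition CH_Y_W :: "nat set \<Rightarrow> ('x::finite \<times> 'y::finite) pmf \<Rightarrow> ('x \<Rightarrow> 'y \<Rightarrow> nat \<Rightarrow> real) \<Rightarrow> real" where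
  "CH_Y_W W P V = (\<Sum>w\<in>W. \<Sum>y\<in>UNIV.
     (let p = pWY P V w y in
      if p = 0 then 0 else - p * log 2 (p / pW P V w)))"

definition CMI_W_Y_X :: "nat set \<Rightarrow> ('x::finite \<times> 'y::finite) pmf \<Rightarrow> ('x \<Rightarrow> 'y \<Rightarrow> nat \<Rightarrow> real) \<Rightarrow> real" where
  "CMI_W_Y_X W P V = (\<Sum>w\<in>W. \<Sum>x\<in>UNIV. \<Sum>y\<in>UNIV.
     (let p = jointp P V w x y in
      if p = 0 then 0 else p * log 2 (p * pX P x / (pWX P V w x * pmf P (x, y)))))"

definition WAK_region :: "real \<Rightarrow> ('x::finite \<times> 'y::finite) pmf \<Rightarrow> (real \<times> real) set" where
  "WAK_region \<delta> P = {(r0, r2). \<exists>W V. cond_dist_on W V \<and>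
       card W \<le> CARD('x) * CARD('y) + 2 \<and>
       r0 \<ge> MI_W_XY W P V \<and> r2 \<ge> CH_Y_W W P V \<and> \<delta> \<ge> CMI_W_Y_X W P V}"

definition R_mu :: "real \<Rightarrow> real \<Rightarrow> ('x::finite \<times> 'y::finite) pmf \<Rightarrow> real" where
  "R_mu \<mu> \<delta> P = Inf {r0 + \<mu> * r2 | r0 r2. (r0, r2) \<in> WAK_region \<delta> P}"

end

theory Submission
  imports Defs "HOL-Real_Asymp.Real_Asymp"
begin

text \<open>All three information quantities are finite sums of continuous functions of the
  conditional distribution \<open>V\<close> (through \<open>t \<mapsto> t log t\<close>), and \<open>V\<close> may be relabelled onto the
  fixed alphabet \<open>{0..<K}\<close> with \<open>K = |X||Y| + 2\<close>, where the admissible \<open>V\<close> form a compact set.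
  Since \<open>R\<^sub>\<mu>(\<delta>)\<close> is antitone in \<open>\<delta>\<close>, it suffices to show lower semicontinuity at \<open>0\<close>:
  if \<open>R\<^sub>\<mu>(\<delta>) \<le> a\<close> for all \<open>\<delta> > 0\<close>, near-optimal \<open>V\<^sub>n\<close> with \<open>I(W\<and>Y|X) \<le> 1/(n+1)\<close> have a
  convergent subsequence whose limit is admissible for \<open>\<delta> = 0\<close> with value at most \<open>a\<close>.\<close>

definition plogp :: "real \<Rightarrow> real" where
  "plogp t = t * log 2 t"

lemma plogp_0 [simp]: "plogp 0 = 0"
  and plogp_1 [simp]: "plogp 1 = 0"
  by (simp_all add: plogp_def)

lemma plogp_nonpos: "0 \<le> t \<Longrightarrow> t \<le> 1 \<Longrightarrow> plogp t \<le> 0"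
  unfolding plogp_def by (cases "t = 0") (auto intro!: mult_nonneg_nonpos)

lemma plogp_lower_bound:
  assumes "0 \<le> t"
  shows "- 1 / ln 2 \<le> plogp t"
proof (cases "t = 0")
  case False
  with assms have t: "t > 0" by simp
  have "ln (1/t) \<le> 1/t - 1" using t by (intro ln_le_minus_one) simp
  hence "t * (- ln t) \<le> t * (1/t - 1)" using t by (intro mult_left_mono) (auto simp: ln_div)
  hence "t * ln t \<ge> -1" using t by (simp add: algebra_simps)
  hence "t * ln t / ln 2 \<ge> -1 / ln 2" by (intro divide_right_mono) auto
  thus ?thesis by (simp add: plogp_def log_def)
qed simp

lemma continuous_on_plogp: "continuous_on {0..} plogp"
proof -
  have "continuous (at t within {0..}) plogp" if t: "t \<ge> 0" for t
  proof (cases "t = 0")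
    case True
    have "plogp = (\<lambda>x. x * ln x / ln 2)" by (auto simp: plogp_def log_def fun_eq_iff)
    moreover have "((\<lambda>x::real. x * ln x / ln 2) \<longlongrightarrow> 0) (at_right 0)" by real_asymp
    moreover have "{0::real..} - {0} = {0<..}" by auto
    hence "at (0::real) within {0..} = at_right 0" by (simp add: at_within_def)
    ultimately show ?thesis using True by (simp add: continuous_within)
  next
    case False
    hence "isCont plogp t" using t unfolding plogp_def by (intro continuous_intros) auto
    thus ?thesis by (rule continuous_at_imp_continuous_within)
  qed
  thus ?thesis by (simp add: continuous_on_eq_continuous_within)
qed

lemma tendsto_plogp:
  assumes "f \<longlonglongrightarrow> l" "\<And>n. f n \<ge> 0"
  shows "(\<lambda>n. plogp (f n)) \<longlonglongrightarrow> plogp l"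
proof -
  have "l \<ge> 0" using assms by (intro LIMSEQ_le_const) auto
  thus ?thesis using continuous_on_tendsto_compose[OF continuous_on_plogp assms(1)] assms(2) by auto
qed

lemma sum_pmf_pair_eq_1:
  "(\<Sum>x\<in>UNIV. \<Sum>y\<in>UNIV. pmf (P :: ('x::finite \<times> 'y::finite) pmf) (x, y)) = 1"
  by (simp add: sum.cartesian_product sum_pmf_eq_1)

context
  fixes P :: "('x::finite \<times> 'y::finite) pmf" and W :: "nat set" and V :: "'x \<Rightarrow> 'y \<Rightarrow> nat \<Rightarrow> real"
  assumes cond_dist: "cond_dist_on W V"
begin

lemma cond_dist_finite: "finite W"
  and cond_dist_nonneg: "0 \<le> V x y w"
  and cond_dist_outside: "w \<notin> W \<Longrightarrow> V x y w = 0"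
  and cond_dist_sum: "(\<Sum>w\<in>W. V x y w) = 1"
  using cond_dist by (simp_all add: cond_dist_on_def)

lemma cond_dist_le_1: "V x y w \<le> 1"
proof (cases "w \<in> W")
  case True
  thus ?thesis using cond_dist_sum cond_dist_finite by (metis member_le_sum cond_dist_nonneg)
qed (simp add: cond_dist_outside)

lemma jointp_nonneg: "0 \<le> jointp P V w x y"
  by (simp add: jointp_def cond_dist_nonneg)

lemma pW_nonneg: "0 \<le> pW P V w"
  and pWY_nonneg: "0 \<le> pWY P V w y"
  and pWX_nonneg: "0 \<le> pWX P V w x"
  by (simp_all add: pW_def pWY_def pWX_def jointp_nonneg sum_nonneg)

lemma pW_eq_sum_pWY: "pW P V w = (\<Sum>y\<in>UNIV. pWY P V w y)"
  unfolding pW_def pWY_def by (rule sum.swap)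

lemma jointp_le_pWX: "jointp P V w x y \<le> pWX P V w x"
  unfolding pWX_def by (rule member_le_sum) (auto simp: jointp_nonneg)

lemma pWX_le_pW: "pWX P V w x \<le> pW P V w"
  unfolding pW_def pWX_def[symmetric] by (rule member_le_sum) (auto simp: pWX_nonneg)

lemma pWY_le_pW: "pWY P V w y \<le> pW P V w"
  unfolding pW_eq_sum_pWY by (rule member_le_sum) (auto simp: pWY_nonneg)

lemma sum_pW_eq_1: "(\<Sum>w\<in>W. pW P V w) = 1"
proof -
  have "(\<Sum>w\<in>W. pW P V w) = (\<Sum>x\<in>UNIV. \<Sum>y\<in>UNIV. pmf P (x, y) * (\<Sum>w\<in>W. V x y w))"
    unfolding pW_def jointp_def sum_distrib_left
    by (subst sum.swap, rule sum.cong, simp, subst sum.swap, simp)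
  thus ?thesis by (simp add: cond_dist_sum sum_pmf_pair_eq_1)
qed

lemma pW_le_1: "pW P V w \<le> 1"
proof (cases "w \<in> W")
  case True
  thus ?thesis using sum_pW_eq_1 cond_dist_finite by (metis member_le_sum pW_nonneg)
qed (simp add: pW_def jointp_def cond_dist_outside)

lemma jointp_pos_iff: "0 < jointp P V w x y \<longleftrightarrow> 0 < pmf P (x, y) \<and> 0 < V x y w"
  using cond_dist_nonneg[of x y w] pmf_nonneg[of P "(x, y)"]
  by (auto simp: jointp_def less_le zero_less_mult_iff)

lemma MI_W_XY_summand:
  "(let p = jointp P V w x y in if p = 0 then 0 else p * log 2 (p / (pW P V w * pmf P (x, y))))
   = pmf P (x, y) * plogp (V x y w) - jointp P V w x y * log 2 (pW P V w)"
proof (cases "jointp P V w x y = 0")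
  case True
  hence "pmf P (x, y) = 0 \<or> V x y w = 0" by (simp add: jointp_def)
  thus ?thesis using True by (auto simp: plogp_def)
next
  case False
  hence pos: "0 < pmf P (x, y)" "0 < V x y w" "0 < jointp P V w x y"
    using jointp_pos_iff jointp_nonneg[of w x y] by (auto simp: less_le)
  hence "0 < pW P V w" using jointp_le_pWX[of w x y] pWX_le_pW[of w x] by linarith
  thus ?thesis using pos
    by (simp add: jointp_def log_divide log_mult plogp_def algebra_simps)
qed

lemma MI_W_XY_eq:
  "MI_W_XY W P V = (\<Sum>w\<in>W. \<Sum>x\<in>UNIV. \<Sum>y\<in>UNIV. pmf P (x, y) * plogp (V x y w))
     - (\<Sum>w\<in>W. plogp (pW P V w))"
proof -
  have "(\<Sum>x\<in>UNIV. \<Sum>y\<in>UNIV. jointp P V w x y * log 2 (pW P V w)) = plogp (pW P V w)" for w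
    by (simp add: plogp_def pW_def sum_distrib_right)
  thus ?thesis unfolding MI_W_XY_def MI_W_XY_summand by (simp add: sum_subtractf)
qed

lemma CH_Y_W_summand:
  "(let p = pWY P V w y in if p = 0 then 0 else - p * log 2 (p / pW P V w))
   = - plogp (pWY P V w y) + pWY P V w y * log 2 (pW P V w)"
proof (cases "pWY P V w y = 0")
  case False
  hence pos: "0 < pWY P V w y" using pWY_nonneg[of w y] by simp
  hence "0 < pW P V w" using pWY_le_pW[of w y] by linarith
  thus ?thesis using pos by (simp add: Let_def log_divide plogp_def algebra_simps)
qed simp

lemma CH_Y_W_eq:
  "CH_Y_W W P V = (\<Sum>w\<in>W. plogp (pW P V w)) - (\<Sum>w\<in>W. \<Sum>y\<in>UNIV. plogp (pWY P V w y))"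
proof -
  have "(\<Sum>y\<in>UNIV. pWY P V w y * log 2 (pW P V w)) = plogp (pW P V w)" for w
    by (simp add: plogp_def pW_eq_sum_pWY sum_distrib_right)
  thus ?thesis unfolding CH_Y_W_def CH_Y_W_summand by (simp add: sum_subtractf)
qed

lemma CMI_W_Y_X_summand:
  "(let p = jointp P V w x y in
      if p = 0 then 0 else p * log 2 (p * pX P x / (pWX P V w x * pmf P (x, y))))
   = pmf P (x, y) * plogp (V x y w) + jointp P V w x y * log 2 (pX P x)
     - jointp P V w x y * log 2 (pWX P V w x)"
proof (cases "jointp P V w x y = 0")
  case True
  hence "pmf P (x, y) = 0 \<or> V x y w = 0" by (simp add: jointp_def)
  thus ?thesis using True by (auto simp: plogp_def)
next
  case False
  hence pos: "0 < pmf P (x, y)" "0 < V x y w" "0 < jointp P V w x y"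
    using jointp_pos_iff jointp_nonneg[of w x y] by (auto simp: less_le)
  moreover have "0 < pWX P V w x" using pos jointp_le_pWX[of w x y] by linarith
  moreover have "0 < pX P x"
    using pos member_le_sum[of y UNIV "\<lambda>y. pmf P (x, y)"] by (simp add: pX_def)
  ultimately show ?thesis
    by (simp add: jointp_def log_divide log_mult plogp_def algebra_simps)
qed

lemma CMI_W_Y_X_eq:
  "CMI_W_Y_X W P V = (\<Sum>w\<in>W. \<Sum>x\<in>UNIV. \<Sum>y\<in>UNIV. pmf P (x, y) * plogp (V x y w))
     + (\<Sum>x\<in>UNIV. plogp (pX P x)) - (\<Sum>w\<in>W. \<Sum>x\<in>UNIV. plogp (pWX P V w x))"
proof -
  have pWX: "(\<Sum>y\<in>UNIV. jointp P V w x y * log 2 (pWX P V w x)) = plogp (pWX P V w x)" for w x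
    by (simp add: plogp_def pWX_def sum_distrib_right)
  have "(\<Sum>w\<in>W. \<Sum>x\<in>UNIV. \<Sum>y\<in>UNIV. jointp P V w x y * log 2 (pX P x))
      = (\<Sum>x\<in>UNIV. \<Sum>y\<in>UNIV. \<Sum>w\<in>W. jointp P V w x y * log 2 (pX P x))"
    by (subst sum.swap, rule sum.cong, simp, rule sum.swap)
  also have "\<dots> = (\<Sum>x\<in>UNIV. \<Sum>y\<in>UNIV. pmf P (x, y) * log 2 (pX P x))"
    by (simp add: jointp_def cond_dist_sum mult.assoc[symmetric]
        flip: sum_distrib_left sum_distrib_right)
  also have "\<dots> = (\<Sum>x\<in>UNIV. plogp (pX P x))"
    by (simp add: plogp_def pX_def sum_distrib_right)
  finally have pX: "(\<Sum>w\<in>W. \<Sum>x\<in>UNIV. \<Sum>y\<in>UNIV. jointp P V w x y * log 2 (pX P x))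
      = (\<Sum>x\<in>UNIV. plogp (pX P x))" .
  show ?thesis unfolding CMI_W_Y_X_def CMI_W_Y_X_summand
    by (simp add: sum.distrib sum_subtractf pWX pX[symmetric])
qed

end

lemma MI_W_XY_lower_bound:
  fixes P :: "('x::finite \<times> 'y::finite) pmf"
  assumes "cond_dist_on W V"
  shows "- real (card W) / ln 2 \<le> MI_W_XY W P V"
proof -
  have "(\<Sum>w\<in>W. \<Sum>x\<in>UNIV. \<Sum>y\<in>UNIV. pmf P (x, y) * (- 1 / ln 2))
      \<le> (\<Sum>w\<in>W. \<Sum>x\<in>UNIV. \<Sum>y\<in>UNIV. pmf P (x, y) * plogp (V x y w))"
    by (intro sum_mono mult_left_mono plogp_lower_bound cond_dist_nonneg[OF assms]) auto
  moreover have "(\<Sum>w\<in>W. \<Sum>x\<in>UNIV. \<Sum>y\<in>UNIV. pmf P (x, y) * (- 1 / ln 2))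
      = - real (card W) / ln 2"
    by (simp only: sum_distrib_right[symmetric]) (simp add: sum_pmf_pair_eq_1)
  moreover have "(\<Sum>w\<in>W. plogp (pW P V w)) \<le> 0"
    by (intro sum_nonpos plogp_nonpos pW_nonneg[OF assms] pW_le_1[OF assms])
  ultimately show ?thesis by (simp add: MI_W_XY_eq[OF assms])
qed

lemma CH_Y_W_lower_bound:
  fixes P :: "('x::finite \<times> 'y::finite) pmf"
  assumes "cond_dist_on W V"
  shows "- real (card W) / ln 2 \<le> CH_Y_W W P V"
proof -
  have "(\<Sum>w\<in>W. \<Sum>y\<in>UNIV. plogp (pWY P V w y)) \<le> 0"
    by (intro sum_nonpos plogp_nonpos pWY_nonneg[OF assms]
        order_trans[OF pWY_le_pW[OF assms] pW_le_1[OF assms]])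
  moreover have "(\<Sum>w\<in>W. - 1 / ln 2) \<le> (\<Sum>w\<in>W. plogp (pW P V w))"
    by (intro sum_mono plogp_lower_bound pW_nonneg[OF assms])
  ultimately show ?thesis by (simp add: CH_Y_W_eq[OF assms])
qed

lemma cond_dist_on_superset:
  fixes P :: "('x::finite \<times> 'y::finite) pmf"
  assumes cd: "cond_dist_on W V" and "W \<subseteq> W'" "finite W'"
  shows "cond_dist_on W' V" "MI_W_XY W' P V = MI_W_XY W P V" "CH_Y_W W' P V = CH_Y_W W P V"
    "CMI_W_Y_X W' P V = CMI_W_Y_X W P V"
proof -
  have out: "V x y w = 0" if "w \<in> W' - W" for w x y
    using that cond_dist_outside[OF cd] by auto
  hence out': "pW P V w = 0" "pWY P V w y = 0" "pWX P V w x = 0" if "w \<in> W' - W" for w x y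
    using that by (simp_all add: pW_def pWY_def pWX_def jointp_def)
  note extend = sum.mono_neutral_right[OF \<open>finite W'\<close> \<open>W \<subseteq> W'\<close>]
  have "(\<Sum>w\<in>W'. V x y w) = (\<Sum>w\<in>W. V x y w)" for x y
    by (rule extend) (simp add: out)
  moreover have "V x y w = 0" if "w \<notin> W'" for x y w
    using that assms(2) cond_dist_outside[OF cd] by blast
  ultimately show cd': "cond_dist_on W' V"
    using cd \<open>finite W'\<close> by (simp add: cond_dist_on_def)
  show "MI_W_XY W' P V = MI_W_XY W P V" unfolding MI_W_XY_eq[OF cd] MI_W_XY_eq[OF cd']
    by (intro arg_cong2[where f="(-)"] extend) (auto simp: out out')
  show "CH_Y_W W' P V = CH_Y_W W P V" unfolding CH_Y_W_eq[OF cd] CH_Y_W_eq[OF cd']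
    by (intro arg_cong2[where f="(-)"] extend) (auto simp: out')
  show "CMI_W_Y_X W' P V = CMI_W_Y_X W P V" unfolding CMI_W_Y_X_eq[OF cd] CMI_W_Y_X_eq[OF cd']
    by (intro arg_cong2[where f="(-)"] arg_cong2[where f="(+)"] extend refl) (auto simp: out out')
qed

lemma cond_dist_on_relabel:
  fixes P :: "('x::finite \<times> 'y::finite) pmf"
  assumes cd: "cond_dist_on W V" and "card W \<le> K"
  obtains V' where "cond_dist_on {0..<K} V'" "MI_W_XY {0..<K} P V' = MI_W_XY W P V"
    "CH_Y_W {0..<K} P V' = CH_Y_W W P V" "CMI_W_Y_X {0..<K} P V' = CMI_W_Y_X W P V"
proof -
  obtain h where h: "bij_betw h W {0..<card W}"
    using ex_bij_betw_finite_nat[OF cond_dist_finite[OF cd]] by blast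
  define V' where "V' = (\<lambda>x y w. if w < card W then V x y (inv_into W h w) else 0)"
  have V': "V' x y (h w) = V x y w" if "w \<in> W" for x y w
    using that h by (auto simp: V'_def bij_betw_def)
  hence j: "jointp P V' (h w) x y = jointp P V w x y" if "w \<in> W" for x y w
    using that by (simp add: jointp_def)
  hence p: "pW P V' (h w) = pW P V w" "pWY P V' (h w) y = pWY P V w y"
    "pWX P V' (h w) x = pWX P V w x" if "w \<in> W" for x y w
    using that by (simp_all add: pW_def pWY_def pWX_def)
  note reindex = sum.reindex_bij_betw[OF h, symmetric]
  have "(\<Sum>w\<in>{0..<card W}. V' x y w) = 1" for x y
    unfolding reindex using V' cond_dist_sum[OF cd] by simp
  hence cd': "cond_dist_on {0..<card W} V'"
    using cond_dist_nonneg[OF cd] by (auto simp: cond_dist_on_def V'_def)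
  have MI: "MI_W_XY {0..<card W} P V' = MI_W_XY W P V"
    unfolding MI_W_XY_def reindex by (intro sum.cong refl) (simp add: j p Let_def)
  have CH: "CH_Y_W {0..<card W} P V' = CH_Y_W W P V"
    unfolding CH_Y_W_def reindex by (intro sum.cong refl) (simp add: p Let_def)
  have CMI: "CMI_W_Y_X {0..<card W} P V' = CMI_W_Y_X W P V"
    unfolding CMI_W_Y_X_def reindex by (intro sum.cong refl) (simp add: j p Let_def)
  have "{0..<card W} \<subseteq> {0..<K}" using assms(2) by auto
  note superset = cond_dist_on_superset[OF cd' this finite_atLeastLessThan]
  show ?thesis
    by (rule that[of V']) (simp_all only: superset MI CH CMI)
qed

lemma bounded_finite_family_convergent_subseq:
  fixes s :: "nat \<Rightarrow> 'a \<Rightarrow> real"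
  assumes "finite I" "\<And>n i. i \<in> I \<Longrightarrow> \<bar>s n i\<bar> \<le> B"
  obtains r where "strict_mono r" "\<And>i. i \<in> I \<Longrightarrow> convergent (\<lambda>n. s (r n) i)"
proof -
  have "\<exists>r. strict_mono r \<and> (\<forall>i\<in>I. convergent (\<lambda>n. s (r n) i))"
    using assms
  proof (induction I rule: finite_induct)
    case empty
    show ?case by (rule exI[of _ id]) (auto simp: strict_mono_def)
  next
    case (insert i I)
    then obtain r where r: "strict_mono r" "\<forall>j\<in>I. convergent (\<lambda>n. s (r n) j)" by auto
    obtain r' where r': "strict_mono r'" "monoseq (\<lambda>n. s (r (r' n)) i)"
      using seq_monosub[of "\<lambda>n. s (r n) i"] by auto
    have "Bseq (\<lambda>n. s (r (r' n)) i)" using insert.prems by (intro BseqI'[of _ B]) auto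
    hence "convergent (\<lambda>n. s (r (r' n)) i)" using r'(2) Bseq_monoseq_convergent by blast
    moreover have "convergent (\<lambda>n. s (r (r' n)) j)" if "j \<in> I" for j
      using r(2) that convergent_subseq_convergent[OF _ r'(1)] by (auto simp: o_def)
    ultimately show ?case using strict_mono_o[OF r(1) r'(1)]
      by (intro exI[of _ "r \<circ> r'"]) (auto simp: o_def)
  qed
  thus ?thesis using that by blast
qed

lemma cond_dist_limit:
  fixes P :: "('x::finite \<times> 'y::finite) pmf"
  assumes cd: "\<And>n. cond_dist_on W (Vs n)"
    and lim: "\<And>x y w. (\<lambda>n. Vs n x y w) \<longlonglongrightarrow> V x y w"
  shows "cond_dist_on W V"
    and "(\<lambda>n. MI_W_XY W P (Vs n)) \<longlonglongrightarrow> MI_W_XY W P V"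
    and "(\<lambda>n. CH_Y_W W P (Vs n)) \<longlonglongrightarrow> CH_Y_W W P V"
    and "(\<lambda>n. CMI_W_Y_X W P (Vs n)) \<longlonglongrightarrow> CMI_W_Y_X W P V"
proof -
  have "V x y w \<ge> 0" for x y w
    using cond_dist_nonneg[OF cd] by (intro LIMSEQ_le_const[OF lim]) auto
  moreover have "V x y w = 0" if "w \<notin> W" for x y w
    using lim[of x y w] cond_dist_outside[OF cd that] by (simp add: LIMSEQ_const_iff)
  moreover have "(\<Sum>w\<in>W. V x y w) = 1" for x y
    using tendsto_sum[of W "\<lambda>w n. Vs n x y w", OF lim] cond_dist_sum[OF cd]
    by (simp add: LIMSEQ_const_iff)
  ultimately show cd': "cond_dist_on W V"
    using cond_dist_finite[OF cd] by (simp add: cond_dist_on_def)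
  have "(\<lambda>n. plogp (Vs n x y w)) \<longlonglongrightarrow> plogp (V x y w)" for x y w
    by (intro tendsto_plogp lim cond_dist_nonneg[OF cd])
  moreover have "(\<lambda>n. plogp (pW P (Vs n) w)) \<longlonglongrightarrow> plogp (pW P V w)" for w
    unfolding pW_def jointp_def
    by (intro tendsto_plogp tendsto_intros lim pW_nonneg[OF cd, unfolded pW_def jointp_def])
  moreover have "(\<lambda>n. plogp (pWY P (Vs n) w y)) \<longlonglongrightarrow> plogp (pWY P V w y)" for w y
    unfolding pWY_def jointp_def
    by (intro tendsto_plogp tendsto_intros lim pWY_nonneg[OF cd, unfolded pWY_def jointp_def])
  moreover have "(\<lambda>n. plogp (pWX P (Vs n) w x)) \<longlonglongrightarrow> plogp (pWX P V w x)" for w x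
    unfolding pWX_def jointp_def
    by (intro tendsto_plogp tendsto_intros lim pWX_nonneg[OF cd, unfolded pWX_def jointp_def])
  ultimately show "(\<lambda>n. MI_W_XY W P (Vs n)) \<longlonglongrightarrow> MI_W_XY W P V"
    and "(\<lambda>n. CH_Y_W W P (Vs n)) \<longlonglongrightarrow> CH_Y_W W P V"
    and "(\<lambda>n. CMI_W_Y_X W P (Vs n)) \<longlonglongrightarrow> CMI_W_Y_X W P V"
    unfolding MI_W_XY_eq[OF cd] MI_W_XY_eq[OF cd'] CH_Y_W_eq[OF cd] CH_Y_W_eq[OF cd']
      CMI_W_Y_X_eq[OF cd] CMI_W_Y_X_eq[OF cd']
    by (auto intro!: tendsto_intros)
qed

lemma cond_dist_seq_compact:
  fixes P :: "('x::finite \<times> 'y::finite) pmf" and Vs :: "nat \<Rightarrow> 'x \<Rightarrow> 'y \<Rightarrow> nat \<Rightarrow> real"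
  assumes cd: "\<And>n. cond_dist_on W (Vs n)"
  obtains r V where "strict_mono r" "cond_dist_on W V"
    "(\<lambda>n. MI_W_XY W P (Vs (r n))) \<longlonglongrightarrow> MI_W_XY W P V"
    "(\<lambda>n. CH_Y_W W P (Vs (r n))) \<longlonglongrightarrow> CH_Y_W W P V"
    "(\<lambda>n. CMI_W_Y_X W P (Vs (r n))) \<longlonglongrightarrow> CMI_W_Y_X W P V"
proof -
  let ?I = "(UNIV :: 'x set) \<times> (UNIV :: 'y set) \<times> W"
  have bound: "\<bar>(\<lambda>(x, y, w). Vs n x y w) i\<bar> \<le> 1" for n i
    using cond_dist_nonneg[OF cd] cond_dist_le_1[OF cd] by (cases i) auto
  obtain r where r: "strict_mono r"
    and conv: "\<And>i. i \<in> ?I \<Longrightarrow> convergent (\<lambda>n. (\<lambda>(x, y, w). Vs (r n) x y w) i)"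
    by (rule bounded_finite_family_convergent_subseq[of ?I "\<lambda>n (x, y, w). Vs n x y w" 1])
      (use bound cond_dist_finite[OF cd] in simp_all)
  have "convergent (\<lambda>n. Vs (r n) x y w)" for x y w
  proof (cases "w \<in> W")
    case True
    thus ?thesis using conv[of "(x, y, w)"] by simp
  qed (simp add: cond_dist_outside[OF cd] convergent_const)
  hence "(\<lambda>n. Vs (r n) x y w) \<longlonglongrightarrow> lim (\<lambda>n. Vs (r n) x y w)" for x y w
    by (simp add: convergent_LIMSEQ_iff)
  from r cond_dist_limit[OF cd this] show ?thesis by (rule that)
qed

definition WAK_values :: "real \<Rightarrow> real \<Rightarrow> ('x::finite \<times> 'y::finite) pmf \<Rightarrow> real set" where
  "WAK_values \<mu> \<delta> P = {r0 + \<mu> * r2 | r0 r2. (r0, r2) \<in> WAK_region \<delta> P}"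

lemma R_mu_eq_Inf_WAK_values: "R_mu \<mu> \<delta> P = Inf (WAK_values \<mu> \<delta> P)"
  by (simp add: R_mu_def WAK_values_def)

lemma WAK_values_mono: "\<delta> \<le> \<delta>' \<Longrightarrow> WAK_values \<mu> \<delta> P \<subseteq> WAK_values \<mu> \<delta>' P"
  unfolding WAK_values_def WAK_region_def by fastforce

lemma WAK_valuesI:
  fixes P :: "('x::finite \<times> 'y::finite) pmf"
  assumes "cond_dist_on W V" "card W \<le> CARD('x) * CARD('y) + 2" "CMI_W_Y_X W P V \<le> \<delta>"
  shows "MI_W_XY W P V + \<mu> * CH_Y_W W P V \<in> WAK_values \<mu> \<delta> P"
  using assms unfolding WAK_values_def WAK_region_def by fastforce

lemma WAK_valuesE:
  fixes P :: "('x::finite \<times> 'y::finite) pmf"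
  assumes "0 \<le> \<mu>" "s \<in> WAK_values \<mu> \<delta> P"
  obtains V where "cond_dist_on {0..<CARD('x) * CARD('y) + 2} V"
    "CMI_W_Y_X {0..<CARD('x) * CARD('y) + 2} P V \<le> \<delta>"
    "MI_W_XY {0..<CARD('x) * CARD('y) + 2} P V + \<mu> * CH_Y_W {0..<CARD('x) * CARD('y) + 2} P V \<le> s"
proof -
  obtain r0 r2 W V where s: "s = r0 + \<mu> * r2" and cd: "cond_dist_on W V"
    and card: "card W \<le> CARD('x) * CARD('y) + 2"
    and le: "MI_W_XY W P V \<le> r0" "CH_Y_W W P V \<le> r2" "CMI_W_Y_X W P V \<le> \<delta>"
    using assms(2) unfolding WAK_values_def WAK_region_def by blast
  obtain V' where "cond_dist_on {0..<CARD('x) * CARD('y) + 2} V'"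
    "MI_W_XY {0..<CARD('x) * CARD('y) + 2} P V' = MI_W_XY W P V"
    "CH_Y_W {0..<CARD('x) * CARD('y) + 2} P V' = CH_Y_W W P V"
    "CMI_W_Y_X {0..<CARD('x) * CARD('y) + 2} P V' = CMI_W_Y_X W P V"
    using cond_dist_on_relabel[OF cd card] .
  moreover have "\<mu> * CH_Y_W W P V \<le> \<mu> * r2" using le(2) assms(1) by (rule mult_left_mono)
  ultimately show ?thesis using that[of V'] le s by simp
qed

lemma bdd_below_WAK_values:
  fixes P :: "('x::finite \<times> 'y::finite) pmf"
  assumes "0 \<le> \<mu>"
  shows "bdd_below (WAK_values \<mu> \<delta> P)"
proof
  let ?b = "- real (CARD('x) * CARD('y) + 2) / ln 2"
  fix s assume "s \<in> WAK_values \<mu> \<delta> P"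
  then obtain V where cd: "cond_dist_on {0..<CARD('x) * CARD('y) + 2} V"
    and s: "MI_W_XY {0..<CARD('x) * CARD('y) + 2} P V
      + \<mu> * CH_Y_W {0..<CARD('x) * CARD('y) + 2} P V \<le> s"
    using WAK_valuesE[OF assms] by blast
  have "\<mu> * ?b \<le> \<mu> * CH_Y_W {0..<CARD('x) * CARD('y) + 2} P V"
    using CH_Y_W_lower_bound[OF cd] assms by (intro mult_left_mono) simp_all
  thus "?b + \<mu> * ?b \<le> s" using MI_W_XY_lower_bound[OF cd, of P] s by simp
qed

lemma WAK_values_nonempty:
  fixes P :: "('x::finite \<times> 'y::finite) pmf"
  assumes "0 \<le> \<delta>"
  shows "WAK_values \<mu> \<delta> P \<noteq> {}"
proof -
  define V where "V = (\<lambda>(x::'x) (y::'y) w::nat. if w = 0 then (1::real) else 0)"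
  have cd: "cond_dist_on {0} V" by (simp add: cond_dist_on_def V_def)
  have "V x y 0 = 1" for x y by (simp add: V_def)
  moreover have "pWX P V 0 x = pX P x" for x by (simp add: pWX_def pX_def jointp_def V_def)
  ultimately have "CMI_W_Y_X {0} P V = 0" by (simp add: CMI_W_Y_X_eq[OF cd])
  with cd assms have "MI_W_XY {0} P V + \<mu> * CH_Y_W {0} P V \<in> WAK_values \<mu> \<delta> P"
    by (intro WAK_valuesI) simp_all
  thus ?thesis by blast
qed

lemma R_mu_antimono:
  fixes P :: "('x::finite \<times> 'y::finite) pmf"
  assumes "0 \<le> \<mu>" "0 \<le> \<delta>" "\<delta> \<le> \<delta>'"
  shows "R_mu \<mu> \<delta>' P \<le> R_mu \<mu> \<delta> P"
  unfolding R_mu_eq_Inf_WAK_values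
  by (intro cInf_superset_mono WAK_values_nonempty bdd_below_WAK_values WAK_values_mono assms)

lemma R_mu_lower_semicontinuous_at_0:
  fixes P :: "('x::finite \<times> 'y::finite) pmf"
  assumes "0 \<le> \<mu>" "a < R_mu \<mu> 0 P"
  shows "\<exists>\<delta>>0. a < R_mu \<mu> \<delta> P"
proof (rule ccontr)
  let ?W = "{0..<CARD('x) * CARD('y) + 2}"
  let ?f = "\<lambda>V. MI_W_XY ?W P V + \<mu> * CH_Y_W ?W P V"
  assume "\<not> ?thesis"
  hence le_a: "\<forall>\<delta>>0. R_mu \<mu> \<delta> P \<le> a" by (meson not_less)
  obtain a' where a': "a < a'" "a' < R_mu \<mu> 0 P" using assms(2) dense by blast
  have "\<exists>V. cond_dist_on ?W V \<and> CMI_W_Y_X ?W P V \<le> inverse (real (Suc n)) \<and> ?f V \<le> a'" for n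
  proof -
    have "Inf (WAK_values \<mu> (inverse (real (Suc n))) P) < a'"
      using le_a[rule_format, of "inverse (real (Suc n))"] a' by (simp add: R_mu_eq_Inf_WAK_values)
    moreover have "WAK_values \<mu> (inverse (real (Suc n))) P \<noteq> {}"
      by (rule WAK_values_nonempty) simp
    ultimately obtain s where "s \<in> WAK_values \<mu> (inverse (real (Suc n))) P" "s < a'"
      using cInf_lessD by blast
    then obtain V where "cond_dist_on ?W V" "CMI_W_Y_X ?W P V \<le> inverse (real (Suc n))"
      "?f V \<le> s"
      using WAK_valuesE[OF assms(1)] by blast
    with \<open>s < a'\<close> show ?thesis by (intro exI[of _ V]) simp
  qed
  then obtain Vs where Vs: "\<And>n. cond_dist_on ?W (Vs n)"
    "\<And>n. CMI_W_Y_X ?W P (Vs n) \<le> inverse (real (Suc n))" "\<And>n. ?f (Vs n) \<le> a'"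
    by metis
  obtain r V where r: "strict_mono r" and cd: "cond_dist_on ?W V"
    and lim: "(\<lambda>n. MI_W_XY ?W P (Vs (r n))) \<longlonglongrightarrow> MI_W_XY ?W P V"
      "(\<lambda>n. CH_Y_W ?W P (Vs (r n))) \<longlonglongrightarrow> CH_Y_W ?W P V"
      "(\<lambda>n. CMI_W_Y_X ?W P (Vs (r n))) \<longlonglongrightarrow> CMI_W_Y_X ?W P V"
    by (rule cond_dist_seq_compact[OF Vs(1)])
  have "(\<lambda>n. ?f (Vs (r n))) \<longlonglongrightarrow> ?f V" by (intro tendsto_intros lim)
  hence "?f V \<le> a'" using Vs(3) by (intro LIMSEQ_le_const2) auto
  moreover have "CMI_W_Y_X ?W P V \<le> 0"
    using lim(3) LIMSEQ_subseq_LIMSEQ[OF LIMSEQ_inverse_real_of_nat r] Vs(2)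
    by (intro LIMSEQ_le) (auto simp: o_def)
  hence "R_mu \<mu> 0 P \<le> ?f V"
    unfolding R_mu_eq_Inf_WAK_values
    by (intro cInf_lower WAK_valuesI cd bdd_below_WAK_values assms(1)) simp_all
  ultimately show False using a' by linarith
qed

lemma tendsto_at_right_0_antimono:
  fixes f :: "real \<Rightarrow> real"
  assumes "\<And>\<delta> \<delta>'. 0 \<le> \<delta> \<Longrightarrow> \<delta> \<le> \<delta>' \<Longrightarrow> f \<delta>' \<le> f \<delta>"
    and "\<And>a. a < f 0 \<Longrightarrow> \<exists>\<delta>>0. a < f \<delta>"
  shows "(f \<longlongrightarrow> f 0) (at_right 0)"
proof (rule order_tendstoI)
  fix a assume "a < f 0"
  then obtain \<delta>0 where \<delta>0: "0 < \<delta>0" "a < f \<delta>0" using assms(2) by blast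
  show "\<forall>\<^sub>F \<delta> in at_right 0. a < f \<delta>"
    unfolding eventually_at_right_field
  proof (intro exI[of _ \<delta>0] conjI allI impI)
    fix \<delta> :: real assume "0 < \<delta>" "\<delta> < \<delta>0"
    with assms(1)[of \<delta> \<delta>0] \<delta>0 show "a < f \<delta>" by linarith
  qed (rule \<delta>0(1))
next
  fix a assume "f 0 < a"
  show "\<forall>\<^sub>F \<delta> in at_right 0. f \<delta> < a"
    unfolding eventually_at_right_field
  proof (intro exI[of _ 1] conjI allI impI)
    fix \<delta> :: real assume "0 < \<delta>"
    with assms(1)[of 0 \<delta>] \<open>f 0 < a\<close> show "f \<delta> < a" by linarith
  qed simp
qed

theorem lemma3:
  fixes P :: "('x::finite \<times> 'y::finite) pmf" and \<mu> :: real
  assumes "\<mu> \<ge> 0"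
  shows "((\<lambda>\<delta>. R_mu \<mu> \<delta> P) \<longlongrightarrow> R_mu \<mu> 0 P) (at_right 0)"
  using R_mu_antimono[OF assms] R_mu_lower_semicontinuous_at_0[OF assms]
  by (rule tendsto_at_right_0_antimono)

end
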